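(* Consider the discrete-time system $x(t+1)=f(x(t),u(t))$ with $f\in\mathbb{R}[x,u]^n$, $x\in\mathbb{R}^n$, $u\in\mathbb{R}^m$, and the nonempty constraint set $\mathbb{P}=\{(x,u)\in\mathbb{R}^n\times\mathbb{R}^m: p_i(x,u)\leq 0,\ i=1,\dots,c\}$ with $p_i\in\mathbb{R}[x,u]$. Let $z\in\mathbb{R}[x,u]^\ell$ be a known vector of polynomials such that $f(x,u)=Az(x,u)=Z(x,u)a$ for some (unknown) $A\in\mathbb{R}^{n\times\ell}$, where $Z(x,u)=I_n\otimes z(x,u)^T$ and $a=\mathrm{vec}(A^T)\in\mathbb{R}^{n\ell}$. Let data $(\tilde{x}_i^+,\tilde{x}_i,\tilde{u}_i)$, $i=1,\dots,D$, satisfy $\tilde{x}_i^+=f(\tilde{x}_i,\tilde{u}_i)+\tilde{d}_i$ with $\tilde{d}_i\in\mathcal{D}_i^{\mathrm{SB}}=\{d\in\mathbb{R}^n:\delta_i(d)\leq 0\}$, where $\delta_i\in\mathbb{R}[d]$ and each $\mathcal{D}_i^{\mathrm{SB}}$ is bounded. Let $s\in\mathbb{R}[x,u]$ be a given supply rate. Suppose there exist $\lambda\in\mathrm{SOS}[x]$, $s_i\in\mathrm{SOS}[x,u,a]$ for $i=1,\dots,c$, and $t_i\in\mathrm{SOS}[x,u,a]$ for $i=1,\dots,D$ such that $\psi\in\mathrm{SOS}[x,u,a]$, where \[\psi(x,u,a)=s(x,u)-\lambda(Z(x,u)a)+\lambda(x)+\sum_{i=1}^{D}\delta_i(\tilde{x}_i^+-Z(\tilde{x}_i,\tilde{u}_i)a)\,t_i(x,u,a)+\sum_{i=1}^{c}p_i(x,u)\,s_i(x,u,a)\]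 (viewed as a polynomial in the variables $x,u,a$). Then the system is dissipative on $\mathbb{P}$ with respect to the supply rate $s$.
   Context: A polynomial matrix $P\in\mathbb{R}[x]^{r\times r}$ of even degree is an SOS matrix if $P=Q^TQ$ for some polynomial matrix $Q\in\mathbb{R}[x]^{s\times r}$; $\mathrm{SOS}[x]^{r\times r}$ denotes the set of such matrices, and for $r=1$ one writes $\mathrm{SOS}[x]$ for SOS polynomials. $\mathrm{vec}$ stacks the columns of a matrix; $\otimes$ is the Kronecker product. Dissipativity: the system $x(t+1)=f(x,u)$ is dissipative on $\mathbb{P}$ with respect to a supply rate $s:\mathbb{P}\to\mathbb{R}$ if there exists a continuous storage function $\lambda:\mathbb{X}\to\mathbb{R}_{\geq 0}$ with $\lambda(f(x,u))-\lambda(x)\leq s(x,u)$ for all $(x,u)\in\mathbb{P}$, where $\mathbb{X}$ is the projection of $\mathbb{P}$ onto $\mathbb{R}^n$. *)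

theory Defs
  imports "HOL-Analysis.Analysis"
begin

text \<open>Over the infinite field
  of reals these are exactly the (multivariate) polynomials in the coordinates.\<close>
inductive_set polyfun :: "('a::euclidean_space \<Rightarrow> real) set" where
  const: "(\<lambda>x. c) \<in> polyfun"
| coord: "b \<in> Basis \<Longrightarrow> (\<lambda>x. x \<bullet> b) \<in> polyfun"
| add: "p \<in> polyfun \<Longrightarrow> q \<in> polyfun \<Longrightarrow> (\<lambda>x. p x + q x) \<in> polyfun"
| mult: "p \<in> polyfun \<Longrightarrow> q \<in> polyfun \<Longrightarrow> (\<lambda>x. p x * q x) \<in> polyfun"

definition sos :: "('a::euclidean_space \<Rightarrow> real) \<Rightarrow> bool" where
  "sos g \<longleftrightarrow> (\<exists>qs. set qs \<subseteq> polyfun \<and> g = (\<lambda>x. \<Sum>q\<leftarrow>qs. (q x)^2))"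

definition dissipative_on ::
  "('x::topological_space \<times> 'u \<Rightarrow> 'x) \<Rightarrow> ('x \<times> 'u) set \<Rightarrow> ('x \<times> 'u \<Rightarrow> real) \<Rightarrow> bool" where
  "dissipative_on f P s \<longleftrightarrow>
     (\<exists>L::'x \<Rightarrow> real. continuous_on (fst ` P) L \<and> (\<forall>x\<in>fst ` P. 0 \<le> L x) \<and>
        (\<forall>(x,u)\<in>P. L (f (x,u)) - L x \<le> s (x,u)))"

end

theory Submission
  imports Defs
begin

text \<open>Evaluate the certificate \<open>\<psi> \<ge> 0\<close> at the true parameter \<open>a = vec(A\<^sup>T)\<close>.
  Since the true \<open>A\<close> explains the data, \<open>x\<^sub>i\<^sup>+ - Z(x\<^sub>i,u\<^sub>i) a = d\<^sub>i\<close> lies in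
  the noise set, so every \<open>\<delta>\<^sub>i t\<^sub>i\<close> term is nonpositive; on \<open>\<bbbP>\<close> so is every
  \<open>p\<^sub>i s\<^sub>i\<close> term.  What remains is the dissipation inequality for the SOS
  storage function \<open>\<lambda>\<close>, which is nonnegative and continuous.\<close>

lemma polyfun_continuous_on: "p \<in> polyfun \<Longrightarrow> continuous_on S p"
  by (induction rule: polyfun.induct) (auto intro!: continuous_intros)

lemma sos_nonneg: "sos g \<Longrightarrow> 0 \<le> g x"
  unfolding sos_def by (auto intro!: sum_list_nonneg)

lemma sos_continuous_on:
  assumes "sos g"
  shows "continuous_on S g"
proof -
  obtain qs where qs: "set qs \<subseteq> polyfun" and g: "g = (\<lambda>x. \<Sum>q\<leftarrow>qs. (q x)^2)"
    using assms unfolding sos_def by blast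
  from qs have "continuous_on S (\<lambda>x. \<Sum>q\<leftarrow>qs. (q x)^2)"
  proof (induction qs)
    case (Cons q qs)
    then have "continuous_on S q"
      by (simp add: polyfun_continuous_on)
    with Cons show ?case
      by (auto intro!: continuous_intros)
  qed simp
  then show ?thesis
    using g by simp
qed

lemma sum_mult_nonpos_nonneg:
  fixes a b :: "nat \<Rightarrow> real"
  assumes "\<And>i. i < k \<Longrightarrow> a i \<le> 0" and "\<And>i. i < k \<Longrightarrow> 0 \<le> b i"
  shows "(\<Sum>i<k. a i * b i) \<le> 0"
  using assms by (intro sum_nonpos) (simp add: mult_nonpos_nonneg)

lemma dissipative_on_sos_storage:
  assumes "sos L" and "\<And>x u. (x, u) \<in> P \<Longrightarrow> L (f (x, u)) - L x \<le> s (x, u)"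
  shows "dissipative_on f P s"
  unfolding dissipative_on_def
  using assms sos_nonneg sos_continuous_on by blast

theorem theorem1:
  fixes f :: "(real^'n) \<times> (real^'m) \<Rightarrow> real^'n"
    and z :: "(real^'n) \<times> (real^'m) \<Rightarrow> real^'l"
    and A0 :: "real^'l^'n"
    and c :: nat and p :: "nat \<Rightarrow> (real^'n) \<times> (real^'m) \<Rightarrow> real"
    and D :: nat and xp xt dt :: "nat \<Rightarrow> real^'n" and ut :: "nat \<Rightarrow> real^'m"
    and \<delta> :: "nat \<Rightarrow> real^'n \<Rightarrow> real"
    and s :: "(real^'n) \<times> (real^'m) \<Rightarrow> real"
    and lam :: "real^'n \<Rightarrow> real"
    and si ti :: "nat \<Rightarrow> (real^'n) \<times> (real^'m) \<times> (real^'l^'n) \<Rightarrow> real"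
  assumes f_poly: "\<forall>j. (\<lambda>w. f w $ j) \<in> polyfun"
    and z_poly: "\<forall>k. (\<lambda>w. z w $ k) \<in> polyfun"
    and f_lin: "\<forall>w. f w = A0 *v z w"
    and p_poly: "\<forall>i<c. p i \<in> polyfun"
    and P_ne: "{w. \<forall>i<c. p i w \<le> 0} \<noteq> {}"
    and data: "\<forall>i<D. xp i = f (xt i, ut i) + dt i \<and> \<delta> i (dt i) \<le> 0"
    and delta_poly: "\<forall>i<D. \<delta> i \<in> polyfun"
    and delta_bdd: "\<forall>i<D. bounded {d. \<delta> i d \<le> 0}"
    and s_poly: "s \<in> polyfun"
    and lam_sos: "sos lam"
    and si_sos: "\<forall>i<c. sos (si i)"
    and ti_sos: "\<forall>i<D. sos (ti i)"
    and psi_sos: "sos (\<lambda>(x, u, A). s (x, u) - lam (A *v z (x, u)) + lam x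
        + (\<Sum>i<D. \<delta> i (xp i - A *v z (xt i, ut i)) * ti i (x, u, A))
        + (\<Sum>i<c. p i (x, u) * si i (x, u, A)))"
  shows "dissipative_on f {w. \<forall>i<c. p i w \<le> 0} s"
proof (rule dissipative_on_sos_storage[OF lam_sos])
  fix x u assume "(x, u) \<in> {w. \<forall>i<c. p i w \<le> 0}"
  then have constraints: "\<And>i. i < c \<Longrightarrow> p i (x, u) \<le> 0"
    by simp
  have noise: "\<And>i. i < D \<Longrightarrow> \<delta> i (xp i - A0 *v z (xt i, ut i)) \<le> 0"
    using data f_lin by simp
  have "0 \<le> s (x, u) - lam (A0 *v z (x, u)) + lam x
      + (\<Sum>i<D. \<delta> i (xp i - A0 *v z (xt i, ut i)) * ti i (x, u, A0))
      + (\<Sum>i<c. p i (x, u) * si i (x, u, A0))"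
    using sos_nonneg[OF psi_sos, of "(x, u, A0)"] by simp
  moreover have "(\<Sum>i<D. \<delta> i (xp i - A0 *v z (xt i, ut i)) * ti i (x, u, A0)) \<le> 0"
    using ti_sos by (intro sum_mult_nonpos_nonneg) (auto simp: noise sos_nonneg)
  moreover have "(\<Sum>i<c. p i (x, u) * si i (x, u, A0)) \<le> 0"
    using si_sos by (intro sum_mult_nonpos_nonneg) (auto simp: constraints sos_nonneg)
  ultimately show "lam (f (x, u)) - lam x \<le> s (x, u)"
    using f_lin by simp
qed

end
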